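(* Let $G=(V,E)$ be a connected geodetic graph, let $r\in V$, and let $T$ be the shortest-path tree of $G$ rooted at $r$. Suppose $u\neq v$ are vertices on the same level of $T$ with $\{u,v\}\in E$. Then for no vertex $u'$ in the subtree of $T$ rooted at $u$ and no vertex $v'$ in the subtree of $T$ rooted at $v$ with $\{u',v'\}\neq\{u,v\}$ is $\{u',v'\}$ an edge of $G$.
   Context: All graphs are finite, simple and undirected. A geodesic from $u$ to $v$ is a shortest path; $G$ is geodetic if for all $u,v\in V$ there is at most one geodesic from $u$ to $v$. For a connected geodetic graph $G$ and $r\in V$, the shortest-path tree rooted at $r$ is the graph $(V,T)$ where $T\subseteq E$ is the set of all edges lying on some shortest path from $r$ to another vertex; it is a tree. The level of a vertex $w$ is its distance $d(r,w)$ from $r$. Subtrees are taken in the rooted tree $(V,T)$. *)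

theory Defs
  imports Main
begin

definition simple_graph :: "'a set \<Rightarrow> ('a \<Rightarrow> 'a \<Rightarrow> bool) \<Rightarrow> bool" where
  "simple_graph V E \<longleftrightarrow> finite V \<and> (\<forall>x y. E x y \<longrightarrow> x \<in> V \<and> y \<in> V)
     \<and> (\<forall>x y. E x y \<longrightarrow> E y x) \<and> (\<forall>x. \<not> E x x)"

definition is_path :: "'a set \<Rightarrow> ('a \<Rightarrow> 'a \<Rightarrow> bool) \<Rightarrow> 'a list \<Rightarrow> bool" where
  "is_path V E p \<longleftrightarrow> p \<noteq> [] \<and> set p \<subseteq> V \<and> distinct p
     \<and> (\<forall>i. Suc i < length p \<longrightarrow> E (p ! i) (p ! Suc i))"

definition path_from_to :: "'a set \<Rightarrow> ('a \<Rightarrow> 'a \<Rightarrow> bool) \<Rightarrow> 'a \<Rightarrow> 'a \<Rightarrow> 'a list \<Rightarrow> bool" where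
  "path_from_to V E u v p \<longleftrightarrow> is_path V E p \<and> hd p = u \<and> last p = v"

definition connected_graph :: "'a set \<Rightarrow> ('a \<Rightarrow> 'a \<Rightarrow> bool) \<Rightarrow> bool" where
  "connected_graph V E \<longleftrightarrow> (\<forall>u\<in>V. \<forall>v\<in>V. \<exists>p. path_from_to V E u v p)"

definition dist :: "'a set \<Rightarrow> ('a \<Rightarrow> 'a \<Rightarrow> bool) \<Rightarrow> 'a \<Rightarrow> 'a \<Rightarrow> nat" where
  "dist V E u v = (LEAST n. \<exists>p. path_from_to V E u v p \<and> length p = Suc n)"

definition geodesic :: "'a set \<Rightarrow> ('a \<Rightarrow> 'a \<Rightarrow> bool) \<Rightarrow> 'a \<Rightarrow> 'a \<Rightarrow> 'a list \<Rightarrow> bool" where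
  "geodesic V E u v p \<longleftrightarrow> path_from_to V E u v p \<and> length p = Suc (dist V E u v)"

definition geodetic :: "'a set \<Rightarrow> ('a \<Rightarrow> 'a \<Rightarrow> bool) \<Rightarrow> bool" where
  "geodetic V E \<longleftrightarrow> (\<forall>u\<in>V. \<forall>v\<in>V. \<forall>p q. geodesic V E u v p \<and> geodesic V E u v q \<longrightarrow> p = q)"

definition spt_edge :: "'a set \<Rightarrow> ('a \<Rightarrow> 'a \<Rightarrow> bool) \<Rightarrow> 'a \<Rightarrow> 'a \<Rightarrow> 'a \<Rightarrow> bool" where
  "spt_edge V E r x y \<longleftrightarrow> E x y \<and> (\<exists>w p i. w \<in> V \<and> w \<noteq> r \<and> geodesic V E r w p \<and> Suc i < length p
      \<and> ({p ! i, p ! Suc i} = {x, y}))"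

definition spt_subtree :: "'a set \<Rightarrow> ('a \<Rightarrow> 'a \<Rightarrow> bool) \<Rightarrow> 'a \<Rightarrow> 'a \<Rightarrow> 'a set" where
  "spt_subtree V E r u = {w \<in> V. \<exists>p. path_from_to V (spt_edge V E r) r w p \<and> u \<in> set p}"

end

theory Submission
  imports Defs
begin

text \<open>In a geodetic graph the tree path from r to w is the unique geodesic from r to w,
so w lies in the subtree of u iff the geodesic from r to w passes through u.
An edge u'v' between the subtrees of u and v joins levels differing by at most one.
If the levels differ, the geodesic to the lower endpoint extends the one to the upper
endpoint, so both run through the same vertex on the level of u and v, forcing u = v.
If u' and v' both lie on level k + a, where k is the level of u and v, then a \<ge> 1
(a = 0 would force u' = u and v' = v) and
d(u,v') \<noteq> a (otherwise the geodesic to v' would pass through u), so d(u,v') = a + 1 and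
the walks u \<dots> u' v' and u v \<dots> v' are two geodesics from u to v' that differ in
their second vertex.\<close>

definition walk :: "'a set \<Rightarrow> ('a \<Rightarrow> 'a \<Rightarrow> bool) \<Rightarrow> 'a \<Rightarrow> 'a \<Rightarrow> 'a list \<Rightarrow> bool" where
  "walk V E x y p \<longleftrightarrow> p \<noteq> [] \<and> set p \<subseteq> V \<and> successively E p \<and> hd p = x \<and> last p = y"

lemma path_from_to_iff_walk: "path_from_to V E x y p \<longleftrightarrow> walk V E x y p \<and> distinct p"
  unfolding path_from_to_def is_path_def walk_def successively_conv_nth by blast

lemma walk_endpoints: "walk V E x y p \<Longrightarrow> x \<in> V \<and> y \<in> V"
  unfolding walk_def by (metis hd_in_set last_in_set subsetD)

lemma walk_append:
  assumes "walk V E x y p" "walk V E y z q"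
  shows "walk V E x z (p @ tl q)"
proof (cases q)
  case Nil
  with assms show ?thesis by (simp add: walk_def)
next
  case (Cons y' q')
  with assms have "y' = y" "last p = y" "p \<noteq> []" by (auto simp: walk_def)
  with assms Cons show ?thesis
    by (cases q') (auto simp: walk_def successively_append_iff)
qed

lemma walk_snoc: "walk V E x y p \<Longrightarrow> E y z \<Longrightarrow> z \<in> V \<Longrightarrow> walk V E x z (p @ [z])"
  using walk_append[of V E x y p z "[y, z]"] walk_endpoints[of V E x y p] by (simp add: walk_def)

lemma walk_Cons: "E x y \<Longrightarrow> x \<in> V \<Longrightarrow> walk V E y z p \<Longrightarrow> walk V E x z (x # p)"
  using walk_append[of V E x y "[x, y]" z p] walk_endpoints[of V E y z p]
  by (cases p) (simp_all add: walk_def)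

lemma walk_take:
  assumes "walk V E x y p" "i < length p"
  shows "walk V E x (p ! i) (take (Suc i) p)"
proof -
  have "successively E (take (Suc i) p @ drop (Suc i) p)"
    using assms(1) by (simp add: walk_def)
  then have "successively E (take (Suc i) p)"
    by (simp only: successively_append_iff)
  moreover have "hd (take (Suc i) p) = hd p"
    using assms(2) by (cases p) auto
  ultimately show ?thesis
    using assms unfolding walk_def by (auto simp: take_Suc_conv_app_nth dest: in_set_takeD)
qed

lemma walk_drop:
  assumes "walk V E x y p" "i < length p"
  shows "walk V E (p ! i) y (drop i p)"
proof -
  have "successively E (take i p @ drop i p)"
    using assms(1) by (simp add: walk_def)
  then have "successively E (drop i p)"
    by (simp only: successively_append_iff)
  then show ?thesis
    using assms unfolding walk_def by (auto simp: hd_drop_conv_nth dest: in_set_dropD)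
qed

lemma walk_snocD:
  assumes "walk V E x z (p @ [z'])" "p \<noteq> []"
  shows "walk V E x (last p) p" "E (last p) z'" "z' = z"
  using assms by (auto simp: walk_def successively_append_iff)

lemma walk_remove_cycle:
  assumes "walk V E x y p" "\<not> distinct p"
  obtains q where "walk V E x y q" "length q < length p"
proof -
  obtain xs ys zs z where p: "p = xs @ (z # ys) @ (z # zs)"
    using not_distinct_decomp[OF assms(2)] by auto
  have "successively E (xs @ (z # ys) @ (z # zs))"
    using assms(1) p by (simp add: walk_def)
  then have "successively E (xs @ z # zs)"
    by (simp only: successively_append_iff) auto
  then have "walk V E x y (xs @ z # zs)"
    using assms(1) unfolding p walk_def by (cases xs) auto
  then show thesis using that p by simp
qed

lemma walk_imp_path:
  assumes "walk V E x y p"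
  obtains q where "path_from_to V E x y q" "length q \<le> length p"
  using assms
proof (induction "length p" arbitrary: p rule: less_induct)
  case less
  show ?case
  proof (cases "distinct p")
    case True
    with less.prems show ?thesis by (auto simp: path_from_to_iff_walk)
  next
    case False
    with less.prems obtain q where "walk V E x y q" "length q < length p"
      by (auto elim: walk_remove_cycle)
    with less.hyps less.prems(1) show ?thesis by (meson order.strict_implies_order order_trans)
  qed
qed

lemma dist_le_path_length:
  assumes "path_from_to V E x y q"
  shows "Suc (dist V E x y) \<le> length q"
proof -
  have "q \<noteq> []" using assms by (simp add: path_from_to_def is_path_def)
  moreover have "dist V E x y \<le> length q - 1"
    unfolding dist_def using assms \<open>q \<noteq> []\<close> by (intro Least_le exI[of _ q]) simp
  ultimately show ?thesis by (cases q) auto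
qed

lemma dist_le_walk_length: "walk V E x y p \<Longrightarrow> Suc (dist V E x y) \<le> length p"
  by (meson walk_imp_path dist_le_path_length order_trans)

lemma geodesic_imp_walk: "geodesic V E x y p \<Longrightarrow> walk V E x y p"
  unfolding geodesic_def path_from_to_iff_walk by blast

lemma walk_geodesic:
  assumes "walk V E x y p" "length p \<le> Suc (dist V E x y)"
  shows "geodesic V E x y p"
proof -
  have "distinct p"
    using assms dist_le_walk_length by (metis not_le walk_remove_cycle le_trans)
  then show ?thesis
    using assms dist_le_walk_length[OF assms(1)]
    by (simp add: geodesic_def path_from_to_iff_walk)
qed

lemma walk_imp_geodesic:
  assumes "walk V E x y p"
  obtains g where "geodesic V E x y g"
proof -
  obtain q where q: "path_from_to V E x y q"
    using walk_imp_path[OF assms] by blast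
  then have "\<exists>n q. path_from_to V E x y q \<and> length q = Suc n"
    by (metis Suc_pred length_greater_0_conv path_from_to_iff_walk walk_def)
  from LeastI_ex[OF this] show thesis
    using that unfolding geodesic_def dist_def by blast
qed

lemma geodesic_exists:
  assumes "connected_graph V E" "x \<in> V" "y \<in> V"
  obtains g where "geodesic V E x y g"
  using assms unfolding connected_graph_def path_from_to_iff_walk
  by (meson walk_imp_geodesic)

lemma geodesic_take:
  assumes "geodesic V E x y p" "i < length p"
  shows "geodesic V E x (p ! i) (take (Suc i) p)"
proof (rule walk_geodesic)
  have p: "walk V E x y p" "length p = Suc (dist V E x y)"
    using geodesic_imp_walk[OF assms(1)] assms(1) by (simp_all add: geodesic_def)
  show w: "walk V E x (p ! i) (take (Suc i) p)"
    using walk_take[OF p(1) assms(2)] .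
  then obtain g where g: "geodesic V E x (p ! i) g"
    by (rule walk_imp_geodesic)
  have "walk V E x y (g @ tl (drop i p))"
    using walk_append[OF geodesic_imp_walk[OF g] walk_drop[OF p(1) assms(2)]] .
  then have "length p \<le> length g + (length p - Suc i)"
    using dist_le_walk_length p(2) by fastforce
  then show "length (take (Suc i) p) \<le> Suc (dist V E x (p ! i))"
    using g assms(2) by (simp add: geodesic_def)
qed

lemma dist_geodesic_nth: "geodesic V E x y p \<Longrightarrow> i < length p \<Longrightarrow> dist V E x (p ! i) = i"
  using geodesic_take[of V E x y p i] by (simp add: geodesic_def)

lemma geodesic_nth_dist: "geodesic V E x y p \<Longrightarrow> p ! dist V E x y = y"
  using geodesic_imp_walk[of V E x y p] last_conv_nth[of p]
  by (simp add: geodesic_def walk_def)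

lemma dist_edge_le:
  assumes "connected_graph V E" "r \<in> V" "E x y" "x \<in> V" "y \<in> V"
  shows "dist V E r y \<le> Suc (dist V E r x)"
proof -
  obtain g where g: "geodesic V E r x g"
    using geodesic_exists assms(1,2,4) by metis
  from dist_le_walk_length[OF walk_snoc[OF geodesic_imp_walk[OF g] assms(3,5)]] g
  show ?thesis by (simp add: geodesic_def)
qed

lemma dist_triangle:
  assumes "connected_graph V E" "x \<in> V" "y \<in> V" "z \<in> V"
  shows "dist V E x z \<le> dist V E x y + dist V E y z"
proof -
  obtain p q where p: "geodesic V E x y p" and q: "geodesic V E y z q"
    using geodesic_exists assms by metis
  then have "walk V E x z (p @ tl q)"
    using walk_append geodesic_imp_walk by metis
  from dist_le_walk_length[OF this] show ?thesis
    using p q by (simp add: geodesic_def)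
qed

lemma geodesic_unique:
  "geodetic V E \<Longrightarrow> geodesic V E x y p \<Longrightarrow> geodesic V E x y q \<Longrightarrow> p = q"
  unfolding geodetic_def by (meson geodesic_imp_walk walk_endpoints)

lemma geodesic_snoc:
  assumes "geodesic V E r x p" "E x y" "y \<in> V" "dist V E r y = Suc (dist V E r x)"
  shows "geodesic V E r y (p @ [y])"
  using walk_snoc[OF geodesic_imp_walk[OF assms(1)] assms(2,3)] assms(1,4)
  by (intro walk_geodesic) (simp_all add: geodesic_def)

lemma geodesic_through_vertex:
  assumes "geodetic V E" "connected_graph V E" "geodesic V E r y q" "u \<in> V"
    and "dist V E r y = dist V E r u + dist V E u y"
  shows "q ! dist V E r u = u"
proof -
  have "r \<in> V" "y \<in> V"
    using walk_endpoints[OF geodesic_imp_walk[OF assms(3)]] by auto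
  then obtain g h where g: "geodesic V E r u g" and h: "geodesic V E u y h"
    using geodesic_exists assms(2,4) by metis
  have "walk V E r y (g @ tl h)"
    using walk_append geodesic_imp_walk g h by metis
  moreover have "length (g @ tl h) \<le> Suc (dist V E r y)"
    using g h assms(5) by (simp add: geodesic_def)
  ultimately have "q = g @ tl h"
    using geodesic_unique[OF assms(1) assms(3)] walk_geodesic by metis
  with g geodesic_nth_dist[OF g] show ?thesis
    by (simp add: nth_append geodesic_def)
qed

lemma spt_edge_geodesic:
  assumes "spt_edge V E r x y"
  obtains g where "geodesic V E r y (g @ [x, y])" | g where "geodesic V E r x (g @ [y, x])"
proof -
  obtain w p i where p: "geodesic V E r w p" "Suc i < length p" "{p ! i, p ! Suc i} = {x, y}"
    using assms unfolding spt_edge_def by blast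
  have "geodesic V E r (p ! Suc i) (take i p @ [p ! i, p ! Suc i])"
    using geodesic_take[OF p(1,2)] p(2) by (simp add: take_Suc_conv_app_nth)
  with p(3) that show thesis by (auto simp: doubleton_eq_iff)
qed

lemma spt_walk_geodesic:
  assumes "geodetic V E" "r \<in> V" "walk V (spt_edge V E r) r w p" "distinct p"
  shows "geodesic V E r w p"
  using assms(3,4)
proof (induction p arbitrary: w rule: rev_induct)
  \<comment> \<open>If the last tree edge led back up, the geodesic to the previous vertex would already
      contain the new one.\<close>
  case Nil
  then show ?case by (simp add: walk_def)
next
  case (snoc x q)
  show ?case
  proof (cases "q = []")
    case True
    with snoc.prems(1) have "walk V E r w (q @ [x])"
      by (auto simp: walk_def)
    then show ?thesis
      using True by (intro walk_geodesic) simp_all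
  next
    case False
    define y where "y = last q"
    have e: "spt_edge V E r y x" and "x = w"
      using walk_snocD[OF snoc.prems(1) False] by (auto simp: y_def)
    have "distinct q"
      using snoc.prems(2) by simp
    with snoc.IH walk_snocD(1)[OF snoc.prems(1) False] have gq: "geodesic V E r y q"
      by (simp add: y_def)
    from spt_edge_geodesic[OF e] show ?thesis
    proof cases
      case (1 g)
      with geodesic_take[OF this, of "length g"]
      have "geodesic V E r y (g @ [y])" by simp
      with gq have "q = g @ [y]" using geodesic_unique[OF assms(1)] by blast
      with 1 \<open>x = w\<close> show ?thesis by simp
    next
      case (2 g)
      with gq have "q = g @ [x, y]" using geodesic_unique[OF assms(1)] by blast
      with snoc.prems(2) show ?thesis by simp
    qed
  qed
qed

lemma spt_subtree_geodesic:
  assumes "geodetic V E" "r \<in> V" "w \<in> spt_subtree V E r u"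
  obtains p where "geodesic V E r w p" "dist V E r u < length p" "p ! dist V E r u = u"
proof -
  obtain p where p: "path_from_to V (spt_edge V E r) r w p" "u \<in> set p"
    using assms(3) unfolding spt_subtree_def by blast
  then have g: "geodesic V E r w p"
    using spt_walk_geodesic[OF assms(1,2)] by (simp add: path_from_to_iff_walk)
  obtain j where j: "j < length p" "p ! j = u"
    using p(2) by (metis in_set_conv_nth)
  moreover have "dist V E r u = j"
    using dist_geodesic_nth[OF g j(1)] j(2) by simp
  ultimately show thesis
    using that g by simp
qed

lemma geodesic_nth_eq_across_edge:
  assumes "geodetic V E" "geodesic V E r x p" "geodesic V E r y q" "E x y"
    and "dist V E r y = Suc (dist V E r x)" "k < length p"
  shows "q ! k = p ! k"
proof -
  have "y \<in> V"
    using walk_endpoints[OF geodesic_imp_walk[OF assms(3)]] by simp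
  with assms have "q = p @ [y]"
    using geodesic_snoc geodesic_unique by metis
  with assms(6) show ?thesis by (simp add: nth_append)
qed

lemma no_edge_between_branches_same_level:
  assumes "geodetic V E" "connected_graph V E"
    and p: "geodesic V E r x p" and q: "geodesic V E r y q" "length q = length p"
    and k: "Suc k < length p" and uv: "E (p ! k) (q ! k)" "p ! k \<noteq> q ! k"
  shows "\<not> E x y"
proof
  assume xy: "E x y"
  define u v a where "u = p ! k" and "v = q ! k" and "a = length p - Suc k"
  have wp: "walk V E r x p" and wq: "walk V E r y q"
    using geodesic_imp_walk[OF p] geodesic_imp_walk[OF q(1)] .
  have V: "r \<in> V" "y \<in> V" "u \<in> V"
    using walk_endpoints[OF wq] wp k unfolding u_def walk_def by auto
  have du: "dist V E r u = k" and dv: "dist V E r v = k" and dy: "dist V E r y = k + a"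
    using dist_geodesic_nth[OF p] dist_geodesic_nth[OF q(1)] k q p
    unfolding u_def v_def a_def geodesic_def by auto
  have "a \<le> dist V E u y"
    using dist_triangle[OF assms(2) V(1,3,2)] du dy by simp
  moreover have "dist V E u y \<noteq> a"
    using geodesic_through_vertex[OF assms(1,2) q(1) V(3)] du dy uv(2)
    unfolding u_def by fastforce
  ultimately have long: "Suc (Suc a) \<le> Suc (dist V E u y)" by simp
  have "walk V E u y (drop k p @ [y])"
    using walk_snoc[OF walk_drop[OF wp] xy V(2)] k unfolding u_def by simp
  then have g1: "geodesic V E u y (drop k p @ [y])"
    using long k by (intro walk_geodesic) (simp_all add: a_def)
  have "walk V E u y (u # drop k q)"
    using walk_Cons[OF uv(1) _ walk_drop[OF wq]] V(3) k q(2) unfolding u_def by simp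
  then have g2: "geodesic V E u y (u # drop k q)"
    using long k q(2) by (intro walk_geodesic) (simp_all add: a_def)
  have "(drop k p @ [y]) ! 1 = (u # drop k q) ! 1"
    using geodesic_unique[OF assms(1) g1 g2] by simp
  then have "p ! Suc k = v"
    using k q(2) unfolding v_def by (simp add: nth_append less_diff_conv)
  then show False
    using dist_geodesic_nth[OF p k] dv by simp
qed

theorem lemma5:
  fixes V :: "'a set" and E :: "'a \<Rightarrow> 'a \<Rightarrow> bool" and r u v u' v' :: 'a
  assumes "simple_graph V E" and "connected_graph V E" and "geodetic V E"
    and "r \<in> V" and "u \<in> V" and "v \<in> V" and "u \<noteq> v"
    and "dist V E r u = dist V E r v"
    and "E u v"
    and "u' \<in> spt_subtree V E r u" and "v' \<in> spt_subtree V E r v"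
    and "{u', v'} \<noteq> {u, v}"
  shows "\<not> E u' v'"
proof
  assume e: "E u' v'"
  define k where "k = dist V E r u"
  obtain p where p: "geodesic V E r u' p" "k < length p" "p ! k = u"
    using spt_subtree_geodesic[OF assms(3,4,10)] k_def by metis
  obtain q where q: "geodesic V E r v' q" "k < length q" "q ! k = v"
    using spt_subtree_geodesic[OF assms(3,4,11)] k_def assms(8) by metis
  have V: "u' \<in> V" "v' \<in> V" and e': "E v' u'"
    using e assms(1) unfolding simple_graph_def by auto
  consider "dist V E r v' = Suc (dist V E r u')" | "dist V E r u' = Suc (dist V E r v')"
    | (same) "dist V E r u' = dist V E r v'"
    using dist_edge_le[OF assms(2,4) e V] dist_edge_le[OF assms(2,4) e' V(2,1)] by linarith
  then show False
  proof cases
    case 1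
    then show False
      using geodesic_nth_eq_across_edge[OF assms(3) p(1) q(1) e _ p(2)] p(3) q(3) assms(7) by simp
  next
    case 2
    then show False
      using geodesic_nth_eq_across_edge[OF assms(3) q(1) p(1) e' _ q(2)] p(3) q(3) assms(7) by simp
  next
    case same
    then have len: "length q = length p"
      using p(1) q(1) by (simp add: geodesic_def)
    have "Suc k < length p"
    proof (rule ccontr)
      assume "\<not> Suc k < length p"
      with same have "dist V E r u' = k" "dist V E r v' = k"
        using p(1,2) by (simp_all add: geodesic_def)
      then have "u' = u" "v' = v"
        using geodesic_nth_dist p(1,3) q(1,3) by metis+
      with assms(12) show False by simp
    qed
    with no_edge_between_branches_same_level[OF assms(3,2) p(1) q(1) len] p(3) q(3) assms(7,9) e
    show False by blast
  qed
qed

end
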